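(* Let $T$ be a vertex of $\mathsf{CS}(\lambda)_{\ell(\lambda)}$, let $b\in B(\lambda)_{\ell(\lambda)}$ be the tableau obtained from $T$ by replacing every entry of $\alpha^{(k)}$ by $k$ for all $k$, where $\alpha=\mathsf{Des}(T)$. Suppose $T\xrightarrow{I}T'$ is an edge of $\mathsf{CS}(\lambda)_{\ell(\lambda)}$ with $I\subseteq\alpha^{(i)}\cup\alpha^{(i+1)}$. Then $$\varphi_i(b)=\min I-\min\alpha^{(i)}+1\quad\text{and}\quad\varepsilon_i(b)=\max\alpha^{(i+1)}-\max I.$$
   Context: French notation; $|\lambda|=N$; $\ell(\lambda)$ is the number of parts of $\lambda$. $\mathsf{SYT}(\lambda)$ standard tableaux; $\mathsf{SSYT}(\lambda)_n$ semistandard tableaux with entries in $[n]$; $\mathsf{row}(b)$ reads rows left to right from top row to bottom row; $\mathsf{std}$ replaces the $a_j$ entries $j$, in reading order, by $a_1+\dots+a_{j-1}+1,\dots,a_1+\dots+a_j$. Crystal operators on $B(\lambda)_n=\mathsf{SSYT}(\lambda)_n$: in the subword of $\mathsf{row}(b)$ of letters $i,i+1$, bracket each $i+1$ with an unbracketed $i$ to its right (parenthesis matching); $f_i$ changes the rightmost unbracketed $i$ to $i+1$ and $e_i$ the leftmost unbracketed $i+1$ to $i$ (giving $\emptyset$ if there is none). String lengths: $\varphi_i(b)=\max\{k\ge0: f_i^k(b)\ne\emptyset\}$, $\varepsilon_i(b)=\max\{k\ge0:e_i^k(b)\ne\emptyset\}$. For a permutation $\pi$ of $[N]$ and $I=[i,i+2m]\subseteq[N]$,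 $m\ge1$, $I$ is a Dyck pattern interval of $\pi$ if the RSK insertion tableau of the subword $\pi|_I$ has bottom row $i,\dots,i+m$ and top row $i+m+1,\dots,i+2m$; a Dyck pattern interval of $T$ is one of $\mathsf{row}(T)$. The crystal skeleton $\mathsf{CS}(\lambda)$ is the directed graph on $\mathsf{SYT}(\lambda)$ with, for each Dyck pattern interval $I=[i,i+2m]$ of $T$, an edge $T\xrightarrow{I}\mathsf{std}(f_i(c))$, $c$ obtained from $T$ by replacing entries $i,\dots,i+m$ by $i$ and $i+m+1,\dots,i+2m$ by $i+1$. Descent composition: $d$ is a descent of $T$ if $d+1$ lies in a strictly higher row; for descents $d_1<\dots<d_k$, $\mathsf{Des}(T)=(d_1,d_2-d_1,\dots,N-d_k)$; $\alpha^{(j)}=\{\alpha_1+\dots+\alpha_{j-1}+1,\dots,\alpha_1+\dots+\alpha_j\}$. $\mathsf{CS}(\lambda)_{\ell(\lambda)}$ is the induced subgraph of $\mathsf{CS}(\lambda)$ on the vertices $T$ such that $\mathsf{Des}(T)$ has exactly $\ell(\lambda)$ parts. *)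

theory Defs
  imports Main
begin

text \<open>A partition is a weakly decreasing list of positive integers.
A tableau is a list of rows, the first row being the bottom (longest) row.\<close>

definition partition :: "nat list \<Rightarrow> bool" where
  "partition lam \<longleftrightarrow> (\<forall>x\<in>set lam. 0 < x) \<and> sorted_wrt (\<ge>) lam"

definition shape :: "nat list list \<Rightarrow> nat list" where
  "shape T = map length T"

definition row_word :: "nat list list \<Rightarrow> nat list" where
  "row_word T = concat (rev T)"

fun chunks :: "nat list \<Rightarrow> 'a list \<Rightarrow> 'a list list" where
  "chunks [] w = []"
| "chunks (n # ns) w = take n w # chunks ns (drop n w)"

definition reshape :: "nat list \<Rightarrow> nat list \<Rightarrow> nat list list" where
  "reshape lam w = rev (chunks (rev lam) w)"

definition cols_strict :: "nat list list \<Rightarrow> bool" where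
  "cols_strict T \<longleftrightarrow> (\<forall>r c. Suc r < length T \<and> c < length (T ! Suc r) \<longrightarrow>
      c < length (T ! r) \<and> T ! r ! c < T ! Suc r ! c)"

definition SSYT :: "nat list \<Rightarrow> nat \<Rightarrow> nat list list set" where
  "SSYT lam n = {T. shape T = lam \<and> (\<forall>r\<in>set T. sorted r) \<and> cols_strict T
                  \<and> set (row_word T) \<subseteq> {1..n}}"

definition SYT :: "nat list \<Rightarrow> nat list list set" where
  "SYT lam = {T. shape T = lam \<and> (\<forall>r\<in>set T. sorted_wrt (<) r) \<and> cols_strict T
                \<and> distinct (row_word T) \<and> set (row_word T) = {1..sum_list lam}}"

text \<open>Scan the word left to right; letters \<open>i+1\<close> are opening brackets, letters \<open>i\<close> closing ones.
Returns (positions of unbracketed \<open>i\<close>, increasing; positions of unbracketed \<open>i+1\<close>, decreasing).\<close>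
fun brk_aux :: "nat \<Rightarrow> nat \<Rightarrow> nat list \<Rightarrow> nat list \<Rightarrow> nat list \<Rightarrow> nat list \<times> nat list" where
  "brk_aux i k [] us st = (us, st)"
| "brk_aux i k (x # xs) us st =
     (if x = Suc i then brk_aux i (Suc k) xs us (k # st)
      else if x = i then
        (case st of [] \<Rightarrow> brk_aux i (Suc k) xs (us @ [k]) st
                  | _ # st' \<Rightarrow> brk_aux i (Suc k) xs us st')
      else brk_aux i (Suc k) xs us st)"

definition brk :: "nat \<Rightarrow> nat list \<Rightarrow> nat list \<times> nat list" where
  "brk i w = brk_aux i 0 w [] []"

definition word_f :: "nat \<Rightarrow> nat list \<Rightarrow> nat list option" where
  "word_f i w = (let us = fst (brk i w) in
     if us = [] then None else Some (w[last us := Suc i]))"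

definition word_e :: "nat \<Rightarrow> nat list \<Rightarrow> nat list option" where
  "word_e i w = (let st = snd (brk i w) in
     if st = [] then None else Some (w[last st := i]))"

definition tab_f :: "nat \<Rightarrow> nat list list \<Rightarrow> nat list list option" where
  "tab_f i T = map_option (reshape (shape T)) (word_f i (row_word T))"

definition tab_e :: "nat \<Rightarrow> nat list list \<Rightarrow> nat list list option" where
  "tab_e i T = map_option (reshape (shape T)) (word_e i (row_word T))"

definition iter_op :: "('a \<Rightarrow> 'a option) \<Rightarrow> nat \<Rightarrow> 'a \<Rightarrow> 'a option" where
  "iter_op g k b = ((\<lambda>z. Option.bind z g) ^^ k) (Some b)"

definition phi :: "nat \<Rightarrow> nat list list \<Rightarrow> nat" where
  "phi i b = (GREATEST k. iter_op (tab_f i) k b \<noteq> None)"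

definition eps :: "nat \<Rightarrow> nat list list \<Rightarrow> nat" where
  "eps i b = (GREATEST k. iter_op (tab_e i) k b \<noteq> None)"

definition std_word :: "nat list \<Rightarrow> nat list" where
  "std_word w = map (\<lambda>p. length (filter (\<lambda>x. x < w ! p) w)
                        + length (filter (\<lambda>x. x = w ! p) (take (Suc p) w))) [0..<length w]"

definition std :: "nat list list \<Rightarrow> nat list list" where
  "std T = reshape (shape T) (std_word (row_word T))"

fun row_ins :: "nat \<Rightarrow> nat list list \<Rightarrow> nat list list" where
  "row_ins x [] = [[x]]"
| "row_ins x (r # rs) =
     (let a = takeWhile (\<lambda>y. y \<le> x) r; b = dropWhile (\<lambda>y. y \<le> x) r in
      if b = [] then (r @ [x]) # rs else (a @ x # tl b) # row_ins (hd b) rs)"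

definition insertion_tableau :: "nat list \<Rightarrow> nat list list" where
  "insertion_tableau w = foldl (\<lambda>P x. row_ins x P) [] w"

definition dyck_pattern :: "nat list \<Rightarrow> nat \<Rightarrow> nat \<Rightarrow> bool" where
  "dyck_pattern w i m \<longleftrightarrow> 1 \<le> m \<and> 1 \<le> i \<and> i + 2 * m \<le> length w \<and>
     insertion_tableau (filter (\<lambda>x. x \<in> {i..i + 2 * m}) w)
       = [[i..<i + m + 1], [i + m + 1..<i + 2 * m + 1]]"

definition dyck_collapse :: "nat \<Rightarrow> nat \<Rightarrow> nat list list \<Rightarrow> nat list list" where
  "dyck_collapse i m T = map (map (\<lambda>x. if i \<le> x \<and> x \<le> i + m then i
        else if i + m + 1 \<le> x \<and> x \<le> i + 2 * m then i + 1 else x)) T"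

definition cs_edge :: "nat list \<Rightarrow> nat list list \<Rightarrow> nat set \<Rightarrow> nat list list \<Rightarrow> bool" where
  "cs_edge lam T I T' \<longleftrightarrow> T \<in> SYT lam \<and>
     (\<exists>i m. I = {i..i + 2 * m} \<and> dyck_pattern (row_word T) i m \<and>
        (\<exists>c'. tab_f i (dyck_collapse i m T) = Some c' \<and> T' = std c'))"

definition rowof :: "nat list list \<Rightarrow> nat \<Rightarrow> nat" where
  "rowof T v = (THE r. r < length T \<and> v \<in> set (T ! r))"

definition descents :: "nat list list \<Rightarrow> nat set" where
  "descents T = {d. 1 \<le> d \<and> d < length (row_word T) \<and> rowof T d < rowof T (d + 1)}"

definition Des :: "nat list list \<Rightarrow> nat list" where
  "Des T = (let bs = 0 # sorted_list_of_set (descents T) @ [length (row_word T)]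
            in map (\<lambda>(a, b). b - a) (zip bs (tl bs)))"

text \<open>\<open>\<alpha>\<^sup>(\<^sup>j\<^sup>)\<close>, 1-indexed.\<close>
definition comp_block :: "nat list \<Rightarrow> nat \<Rightarrow> nat set" where
  "comp_block \<alpha> j = {sum_list (take (j - 1) \<alpha>) + 1 .. sum_list (take j \<alpha>)}"

definition blockof :: "nat list \<Rightarrow> nat \<Rightarrow> nat" where
  "blockof \<alpha> x = (LEAST k. 1 \<le> k \<and> x \<in> comp_block \<alpha> k)"

definition CS_vert :: "nat list \<Rightarrow> nat list list set" where
  "CS_vert lam = {T \<in> SYT lam. length (Des T) = length lam}"

definition CS_edge :: "nat list \<Rightarrow> nat list list \<Rightarrow> nat set \<Rightarrow> nat list list \<Rightarrow> bool" where
  "CS_edge lam T I T' \<longleftrightarrow> T \<in> CS_vert lam \<and> T' \<in> CS_vert lam \<and> cs_edge lam T I T'"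

end

(*
  Since Des T has exactly \<ell>(\<lambda>) parts, the descents of T are exactly the numbers T(r,1) - 1
  for the first entries T(r,1) of the rows r \<ge> 2. Hence every block of Des T is read in
  increasing order in row(T), and the blocks end at block_end r = T(r+1,1) - 1.

  By the signature rule, \<phi>_i(b) is the largest excess of letters i over letters i+1 in a
  prefix of row(b), and \<epsilon>_i(b) is \<phi>_i(b) minus the total excess. Write
  \<alpha>^(i) = [lo, mid], \<alpha>^(i+1) = [mid+1, hi] and I = [j, j+2m]. The parts of I in the two
  blocks are read in increasing order, so RSK insertion of row(T)|_I is explicit, and
  the Dyck pattern condition forces mid = j+m and leaves a single unbracketed j in the
  collapsed tableau c, at an entry x0 of [j, mid], and no unbracketed j+1.
  Consequently every prefix excess of row(b) is at most (j - lo) + 1, with equality right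
  after x0 as soon as all of [mid+m+1, hi] is read after x0. That last fact is where
  T' \<in> CS(\<lambda>)_\<ell> enters: standardizing f_j(c) fixes all entries outside I and creates no
  descent of T' in [mid, mid+m], so row(T') reads the values from std(x0) up to mid+m+1 in
  increasing order, and std fixes the position of x0 and of mid+m+1.
*)

theory Submission
  imports Defs
begin

section \<open>Bracketing and string lengths\<close>

definition brk_step :: "nat \<Rightarrow> nat \<Rightarrow> nat \<Rightarrow> nat list \<times> nat list \<Rightarrow> nat list \<times> nat list" where
  "brk_step i k x s = (case s of (us, st) \<Rightarrow>
     (if x = Suc i then (us, k # st) else if x = i then
        (case st of [] \<Rightarrow> (us @ [k], st) | _ # st' \<Rightarrow> (us, st')) else (us, st)))"

lemma bracket_cases:
  obtains "x = Suc i" | "x = i" "st = []" | y st' where "x = i" "st = y # st'" | "x \<noteq> i" "x \<noteq> Suc i"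
  by (cases st) auto

lemma brk_aux_append:
  "brk_aux i k (xs @ ys) us st =
     (case brk_aux i k xs us st of (us', st') \<Rightarrow> brk_aux i (k + length xs) ys us' st')"
  by (induction xs arbitrary: k us st) (auto split: list.splits)

lemma brk_aux_Cons_Nil: "brk_aux i k [x] us st = brk_step i k x (us, st)"
  by (auto simp: brk_step_def split: list.splits)

lemma brk_snoc: "brk i (xs @ [x]) = brk_step i (length xs) x (brk i xs)"
  by (cases "brk i xs") (simp add: brk_def brk_aux_append brk_step_def split: list.splits)

lemma brk_aux_fst_append:
  "brk_aux i k xs (us @ vs) st = (us @ fst (brk_aux i k xs vs st), snd (brk_aux i k xs vs st))"
  by (induction xs arbitrary: k vs st) (auto split: list.splits)

lemma brk_aux_fst_acc:
  "brk_aux i k xs us st = (us @ fst (brk_aux i k xs [] st), snd (brk_aux i k xs [] st))"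
  using brk_aux_fst_append[of i k xs us "[]" st] by simp

lemma set_fst_brk_aux: "set (fst (brk_aux i k xs [] st)) \<subseteq> {k..<k + length xs}"
proof (induction xs arbitrary: k st)
  case (Cons x xs)
  have "set (fst (brk_aux i (Suc k) xs [] st')) \<subseteq> {k..<k + length (x # xs)}" for st'
    using Cons.IH[of "Suc k" st'] by auto
  then show ?case using brk_aux_fst_acc[of i "Suc k" xs "[k]" "[]"] by (auto split: list.splits)
qed simp

lemma snd_brk_aux_suffix:
  "\<exists>Y d. snd (brk_aux i k xs us st) = Y @ drop d st \<and> set Y \<subseteq> {k..<k + length xs}"
proof (induction xs arbitrary: k us st)
  case Nil show ?case by (intro exI[of _ "[]"] exI[of _ 0]) simp
next
  case (Cons x xs)
  show ?case
  proof (cases rule: bracket_cases[where x = x and i = i and st = st])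
    case 1
    then obtain Y d where Y: "snd (brk_aux i k (x # xs) us st) = Y @ drop d (k # st)"
      "set Y \<subseteq> {Suc k..<Suc k + length xs}" using Cons.IH[of "Suc k" us "k # st"] 1 by auto
    then show ?thesis
    proof (cases d)
      case 0
      then show ?thesis using Y by (intro exI[of _ "Y @ [k]"] exI[of _ 0]) auto
    next
      case (Suc d')
      then show ?thesis using Y by (intro exI[of _ Y] exI[of _ d']) auto
    qed
  next
    case 2
    then show ?thesis using Cons.IH[of "Suc k" "us @ [k]" "[]"] by fastforce
  next
    case (3 y st')
    then obtain Y d where "snd (brk_aux i k (x # xs) us st) = Y @ drop d st'"
      "set Y \<subseteq> {Suc k..<Suc k + length xs}" using Cons.IH[of "Suc k" us st'] by auto
    then show ?thesis using 3 by (intro exI[of _ Y] exI[of _ "Suc d"]) auto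
  next
    case 4
    then show ?thesis using Cons.IH[of "Suc k" us st] by fastforce
  qed
qed

lemma brk_aux_stack_snoc:
  assumes "z < k"
  shows "(fst (brk_aux i k xs us st) = us \<longrightarrow>
            brk_aux i k xs us (st @ [z]) = (us, snd (brk_aux i k xs us st) @ [z])) \<and>
         (fst (brk_aux i k xs us st) \<noteq> us \<longrightarrow> z \<notin> set (snd (brk_aux i k xs us (st @ [z]))))"
  using assms
proof (induction xs arbitrary: k us st)
  case (Cons x xs)
  have z: "z < Suc k" using Cons.prems by simp
  show ?case
  proof (cases rule: bracket_cases[where x = x and i = i and st = st])
    case 1
    then show ?thesis using Cons.IH[OF z, of us "k # st"] by simp
  next
    case 2
    have "fst (brk_aux i (Suc k) xs (us @ [k]) []) \<noteq> us"
      using brk_aux_fst_acc[of i "Suc k" xs "us @ [k]" "[]"] by auto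
    moreover obtain Y d where "snd (brk_aux i (Suc k) xs us []) = Y @ drop d []"
      "set Y \<subseteq> {Suc k..<Suc k + length xs}" using snd_brk_aux_suffix by blast
    ultimately show ?thesis using 2 Cons.prems by auto
  next
    case (3 y st')
    then show ?thesis using Cons.IH[OF z, of us st'] by simp
  next
    case 4
    then show ?thesis using Cons.IH[OF z, of us st] by simp
  qed
qed simp

lemma brk_split_at:
  assumes "k < length w"
  shows "brk i w = (case brk_step i k (w ! k) (brk i (take k w)) of
                     (us, st) \<Rightarrow> brk_aux i (Suc k) (drop (Suc k) w) us st)"
proof -
  obtain U0 S0 where u0: "brk i (take k w) = (U0, S0)" by fastforce
  obtain U1 S1 where u1: "brk_step i k (w ! k) (U0, S0) = (U1, S1)" by fastforce
  have "w = take k w @ [w ! k] @ drop (Suc k) w" using assms by (simp add: id_take_nth_drop)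
  then have "brk i w = brk_aux i 0 (take k w @ [w ! k] @ drop (Suc k) w) [] []"
    unfolding brk_def by metis
  also have "\<dots> = brk_aux i k ([w ! k] @ drop (Suc k) w) U0 S0"
    unfolding brk_aux_append using u0 assms by (simp add: brk_def)
  also have "\<dots> = brk_aux i (Suc k) (drop (Suc k) w) U1 S1"
    unfolding brk_aux_append brk_aux_Cons_Nil u1 by simp
  finally show ?thesis using u0 u1 by simp
qed

lemma brk_take_Suc:
  "k < length w \<Longrightarrow> brk i (take (Suc k) w) = brk_step i k (w ! k) (brk i (take k w))"
  using brk_snoc[of i "take k w" "w ! k"] by (simp add: take_Suc_conv_app_nth)

lemma set_fst_brk: "set (fst (brk i w)) \<subseteq> {..<length w}"
  using set_fst_brk_aux[of i 0 w "[]"] by (auto simp: brk_def)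

lemma set_snd_brk: "set (snd (brk i w)) \<subseteq> {..<length w}"
  using snd_brk_aux_suffix[of i 0 w "[]" "[]"] by (auto simp: brk_def)

lemma brk_last_unbracketed:
  assumes ne: "fst (brk i w) \<noteq> []" and k: "k = last (fst (brk i w))"
  shows "k < length w" and "w ! k = i" and "brk i (take k w) = (butlast (fst (brk i w)), [])"
    and "fst (brk_aux i (Suc k) (drop (Suc k) w) [] []) = []"
proof -
  show kw: "k < length w" using set_fst_brk[of i w] ne k last_in_set by blast
  obtain U0 S0 where u0: "brk i (take k w) = (U0, S0)" by fastforce
  have U0: "set U0 \<subseteq> {..<k}" using set_fst_brk[of i "take k w"] u0 kw by simp
  obtain U1 S1 where u1: "brk_step i k (w ! k) (U0, S0) = (U1, S1)" by fastforce
  define X where "X = fst (brk_aux i (Suc k) (drop (Suc k) w) [] S1)"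
  have fw: "fst (brk i w) = U1 @ X"
    using brk_split_at[OF kw, of i] u0 u1 brk_aux_fst_acc[of i "Suc k" _ U1 S1] X_def by simp
  have X: "set X \<subseteq> {Suc k..<Suc k + length (drop (Suc k) w)}"
    using set_fst_brk_aux X_def by blast
  have "X = []"
  proof (rule ccontr)
    assume "X \<noteq> []"
    then have "last X = k" using fw k by simp
    then show False using X \<open>X \<noteq> []\<close> last_in_set by fastforce
  qed
  then have "U1 \<noteq> []" "last U1 = k" using fw ne k by auto
  then have "U1 \<noteq> U0" using U0 last_in_set by fastforce
  then have step: "w ! k = i" "S0 = []" "U1 = U0 @ [k]" "S1 = []"
    using u1 by (auto simp: brk_step_def split: if_splits list.splits)
  then show "w ! k = i" by simp
  show "brk i (take k w) = (butlast (fst (brk i w)), [])" using u0 fw \<open>X = []\<close> step by simp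
  show "fst (brk_aux i (Suc k) (drop (Suc k) w) [] []) = []" using X_def \<open>X = []\<close> step by simp
qed

lemma brk_take_last_unbracketed:
  assumes "fst (brk i w) \<noteq> []" and "k = last (fst (brk i w))"
  shows "brk i (take (Suc k) w) = (fst (brk i w), [])"
  using brk_last_unbracketed[OF assms] brk_take_Suc[of k w i] assms
  by (simp add: brk_step_def)

lemma fst_brk_update_last_unbracketed:
  assumes "fst (brk i w) \<noteq> []" and "k = last (fst (brk i w))"
  shows "fst (brk i (w[k := Suc i])) = butlast (fst (brk i w))"
proof -
  note last_k = brk_last_unbracketed[OF assms]
  define U0 where "U0 = butlast (fst (brk i w))"
  have "brk i (w[k := Suc i]) = brk_aux i (Suc k) (drop (Suc k) w) U0 ([] @ [k])"
    using brk_split_at[of k "w[k := Suc i]" i] last_k U0_def by (simp add: brk_step_def)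
  moreover have "fst (brk_aux i (Suc k) (drop (Suc k) w) U0 []) = U0"
    using brk_aux_fst_acc[of i "Suc k" _ U0] last_k(4) by simp
  ultimately show ?thesis
    using brk_aux_stack_snoc[of k "Suc k" i _ U0 "[]"] U0_def by simp
qed

lemma snd_brk_update_last_unbracketed:
  assumes ne: "snd (brk i w) \<noteq> []" and s: "s = last (snd (brk i w))"
  shows "s < length w" and "snd (brk i (w[s := i])) = butlast (snd (brk i w))"
proof -
  have s_in: "s \<in> set (snd (brk i w))" using ne s by simp
  then show sw: "s < length w" using set_snd_brk by fastforce
  obtain U0 S0 where u0: "brk i (take s w) = (U0, S0)" by fastforce
  have S0: "set S0 \<subseteq> {..<s}" using set_snd_brk[of i "take s w"] u0 sw by simp
  obtain U1 S1 where u1: "brk_step i s (w ! s) (U0, S0) = (U1, S1)" by fastforce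
  define suf where "suf = drop (Suc s) w"
  have main: "brk i w = brk_aux i (Suc s) suf U1 S1"
    using brk_split_at[OF sw, of i] u0 u1 suf_def by simp
  obtain Y d where Y: "snd (brk i w) = Y @ drop d S1" "set Y \<subseteq> {Suc s..<Suc s + length suf}"
    using snd_brk_aux_suffix[of i "Suc s" suf U1 S1] main by auto
  have s_drop: "s \<in> set (drop d S1)" using s_in Y by auto
  then have "s \<in> set S1" by (meson in_set_dropD)
  then have step: "w ! s = Suc i" "S1 = s # S0" "U1 = U0"
    using u1 S0 by (auto simp: brk_step_def split: if_splits list.splits)
  have "S0 = []"
  proof (rule ccontr)
    assume S0_ne: "S0 \<noteq> []"
    have "last (snd (brk i w)) = last (drop d S1)" using Y s_drop by (metis empty_iff last_appendR list.set(1))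
    also have "\<dots> = last S1" using s_drop by (intro last_drop) (metis drop_all empty_iff list.set(1) not_le)
    also have "\<dots> = last S0" using S0_ne step by simp
    finally show False using s S0 S0_ne last_in_set by fastforce
  qed
  then have orig: "brk i w = brk_aux i (Suc s) suf U0 ([] @ [s])" using main step by simp
  have "fst (brk_aux i (Suc s) suf U0 []) = U0"
    using brk_aux_stack_snoc[of s "Suc s" i suf U0 "[]"] orig s_in by auto
  then have "snd (brk i w) = snd (brk_aux i (Suc s) suf U0 []) @ [s]"
    using orig brk_aux_stack_snoc[of s "Suc s" i suf U0 "[]"] by simp
  moreover have "brk i (w[s := i]) = brk_aux i (Suc s) suf (U0 @ [s]) []"
    using brk_split_at[of s "w[s := i]" i] sw u0 \<open>S0 = []\<close> suf_def by (simp add: brk_step_def)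
  ultimately show "snd (brk i (w[s := i])) = butlast (snd (brk i w))"
    using brk_aux_fst_acc[of i "Suc s" suf "U0 @ [s]" "[]"] brk_aux_fst_acc[of i "Suc s" suf U0 "[]"]
    by simp
qed

definition excess :: "nat \<Rightarrow> nat list \<Rightarrow> int" where
  "excess i xs = int (length (filter (\<lambda>y. y = i) xs)) - int (length (filter (\<lambda>y. y = Suc i) xs))"

definition max_excess :: "nat \<Rightarrow> nat list \<Rightarrow> int" where
  "max_excess i xs = Max ((\<lambda>j. excess i (take j xs)) ` {..length xs})"

lemma max_excess_snoc: "max_excess i (xs @ [x]) = max (max_excess i xs) (excess i (xs @ [x]))"
proof -
  have "{..length (xs @ [x])} = insert (Suc (length xs)) {..length xs}" by auto
  then have "(\<lambda>j. excess i (take j (xs @ [x]))) ` {..length (xs @ [x])} =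
        insert (excess i (xs @ [x])) ((\<lambda>j. excess i (take j xs)) ` {..length xs})"
    by auto
  then show ?thesis unfolding max_excess_def by (simp add: max.commute)
qed

lemma excess_take_le_max_excess: "j \<le> length xs \<Longrightarrow> excess i (take j xs) \<le> max_excess i xs"
  unfolding max_excess_def by (intro Max_ge) auto

lemma max_excess_le: "(\<And>j. j \<le> length xs \<Longrightarrow> excess i (take j xs) \<le> B) \<Longrightarrow> max_excess i xs \<le> B"
  unfolding max_excess_def by (rule Max.boundedI) auto

lemma length_brk_max_excess:
  "int (length (fst (brk i xs))) = max_excess i xs \<and>
   int (length (snd (brk i xs))) = max_excess i xs - excess i xs"
proof (induction xs rule: rev_induct)
  case Nil
  then show ?case by (simp add: brk_def max_excess_def excess_def)
next
  case (snoc x xs)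
  obtain us st where b: "brk i xs = (us, st)" by fastforce
  have le: "excess i xs \<le> max_excess i xs"
    using excess_take_le_max_excess[of "length xs" xs i] by simp
  show ?case
    using snoc b le by (cases rule: bracket_cases[where x = x and i = i and st = st])
      (auto simp: brk_snoc brk_step_def max_excess_snoc excess_def)
qed

lemma length_brk_filter_aux:
  assumes "length us = length us'" "length st = length st'"
  shows "length (fst (brk_aux i k xs us st)) =
           length (fst (brk_aux i k' (filter (\<lambda>y. y = i \<or> y = Suc i) xs) us' st'))
       \<and> length (snd (brk_aux i k xs us st)) =
           length (snd (brk_aux i k' (filter (\<lambda>y. y = i \<or> y = Suc i) xs) us' st'))"
  using assms
proof (induction xs arbitrary: k k' us us' st st')
  case (Cons x xs)
  show ?case
  proof (cases rule: bracket_cases[where x = x and i = i and st = st])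
    case 1
    then show ?thesis using Cons.IH[of us us' "k # st" "k' # st'"] Cons.prems by simp
  next
    case 2
    then show ?thesis using Cons.IH[of "us @ [k]" "us' @ [k']" "[]" "[]"] Cons.prems by simp
  next
    case (3 y sr)
    then obtain y' sr' where "st' = y' # sr'" using Cons.prems by (cases st') auto
    then show ?thesis using 3 Cons.IH[of us us' sr sr'] Cons.prems by simp
  next
    case 4
    then show ?thesis using Cons.IH[of us us' st st'] Cons.prems by simp
  qed
qed simp

lemma length_brk_filter:
  "length (fst (brk i (filter (\<lambda>y. y = i \<or> y = Suc i) xs))) = length (fst (brk i xs)) \<and>
   length (snd (brk i (filter (\<lambda>y. y = i \<or> y = Suc i) xs))) = length (snd (brk i xs))"
  using length_brk_filter_aux[of "[]" "[]" "[]" "[]" i 0 xs 0] by (simp add: brk_def)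

lemma excess_take_map:
  assumes "distinct w"
  shows "excess c (take n (map g w)) =
     int (card ({x. g x = c} \<inter> set (take n w))) - int (card ({x. g x = Suc c} \<inter> set (take n w)))"
  using assms by (simp add: excess_def take_map filter_map distinct_length_filter comp_def)

lemma funpow_bind_None: "((\<lambda>z. Option.bind z (g :: 'a \<Rightarrow> 'a option)) ^^ k) None = None"
  by (induction k) auto

lemma iter_op_Suc: "iter_op g (Suc k) b = (case g b of None \<Rightarrow> None | Some b' \<Rightarrow> iter_op g k b')"
  unfolding iter_op_def funpow_Suc_right by (simp add: funpow_bind_None split: option.splits)

lemma iter_op_defined_iff:
  assumes "\<And>b. g b = None \<longleftrightarrow> \<mu> b = (0::nat)"
    and "\<And>b b'. g b = Some b' \<Longrightarrow> \<mu> b' = \<mu> b - 1"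
  shows "iter_op g k b \<noteq> None \<longleftrightarrow> k \<le> \<mu> b"
proof (induction k arbitrary: b)
  case 0
  then show ?case by (simp add: iter_op_def)
next
  case (Suc k)
  then show ?case using assms[of b] by (cases "g b") (auto simp: iter_op_Suc)
qed

lemma Greatest_iter_op:
  assumes "\<And>b. g b = None \<longleftrightarrow> \<mu> b = (0::nat)"
    and "\<And>b b'. g b = Some b' \<Longrightarrow> \<mu> b' = \<mu> b - 1"
  shows "(GREATEST k. iter_op g k b \<noteq> None) = \<mu> b"
  using iter_op_defined_iff[OF assms] by (intro Greatest_equality) auto

lemma concat_chunks: "concat (chunks ns w) = take (sum_list ns) w"
  by (induction ns arbitrary: w) (auto simp: take_add)

lemma map_length_chunks: "sum_list ns \<le> length w \<Longrightarrow> map length (chunks ns w) = ns"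
  by (induction ns arbitrary: w) auto

lemma length_row_word: "length (row_word T) = sum_list (shape T)"
  by (simp add: row_word_def shape_def length_concat rev_map[symmetric])

lemma row_word_reshape: "length w = sum_list lam \<Longrightarrow> row_word (reshape lam w) = w"
  by (simp add: row_word_def reshape_def concat_chunks)

lemma shape_reshape: "length w = sum_list lam \<Longrightarrow> shape (reshape lam w) = lam"
  by (simp add: shape_def reshape_def rev_map[symmetric] map_length_chunks)

lemma row_word_map: "row_word (map (map g) T) = map g (row_word T)"
  by (simp add: row_word_def rev_map map_concat)

lemma shape_map: "shape (map (map g) T) = shape T"
  by (simp add: shape_def comp_def)

lemma phi_eq_length_brk: "phi i T = length (fst (brk i (row_word T)))"
  unfolding phi_def
proof (rule Greatest_iter_op)
  fix b
  show "tab_f i b = None \<longleftrightarrow> length (fst (brk i (row_word b))) = 0"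
    by (simp add: tab_f_def word_f_def Let_def)
next
  fix b b' assume "tab_f i b = Some b'"
  then obtain w' where "word_f i (row_word b) = Some w'" "b' = reshape (shape b) w'"
    by (auto simp: tab_f_def)
  then show "length (fst (brk i (row_word b'))) = length (fst (brk i (row_word b))) - 1"
    using fst_brk_update_last_unbracketed[of i "row_word b"]
    by (auto simp: word_f_def Let_def row_word_reshape length_row_word split: if_splits)
qed

lemma eps_eq_length_brk: "eps i T = length (snd (brk i (row_word T)))"
  unfolding eps_def
proof (rule Greatest_iter_op)
  fix b
  show "tab_e i b = None \<longleftrightarrow> length (snd (brk i (row_word b))) = 0"
    by (simp add: tab_e_def word_e_def Let_def)
next
  fix b b' assume "tab_e i b = Some b'"
  then obtain w' where "word_e i (row_word b) = Some w'" "b' = reshape (shape b) w'"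
    by (auto simp: tab_e_def)
  then show "length (snd (brk i (row_word b'))) = length (snd (brk i (row_word b))) - 1"
    using snd_brk_update_last_unbracketed[of i "row_word b"]
    by (auto simp: word_e_def Let_def row_word_reshape length_row_word split: if_splits)
qed

section \<open>Standard tableaux read row by row\<close>

definition row_offset :: "nat list list \<Rightarrow> nat \<Rightarrow> nat" where
  "row_offset T r = sum_list (map length (drop (Suc r) T))"

(* unspecified unless x occurs in w exactly once *)
definition index_of :: "nat list \<Rightarrow> nat \<Rightarrow> nat" where
  "index_of w x = (THE j. j < length w \<and> w ! j = x)"

lemma index_of_nth: "distinct w \<Longrightarrow> j < length w \<Longrightarrow> index_of w (w ! j) = j"
  unfolding index_of_def by (rule the_equality) (auto simp: nth_eq_iff_index_eq)

lemma index_of_in: "distinct w \<Longrightarrow> x \<in> set w \<Longrightarrow> index_of w x < length w \<and> w ! index_of w x = x"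
  by (metis in_set_conv_nth index_of_nth)

lemma in_set_take_iff_index_of:
  "distinct w \<Longrightarrow> x \<in> set w \<Longrightarrow> x \<in> set (take j w) \<longleftrightarrow> index_of w x < j"
  by (metis in_set_conv_nth index_of_in index_of_nth length_take min_less_iff_conj nth_take)

lemma row_offset_Suc: "Suc r < length T \<Longrightarrow> row_offset T r = length (T ! Suc r) + row_offset T (Suc r)"
  unfolding row_offset_def by (simp add: Cons_nth_drop_Suc[symmetric])

lemma row_offset_less: "r < r' \<Longrightarrow> r' < length T \<Longrightarrow> row_offset T r' + length (T ! r') \<le> row_offset T r"
proof (induction r' arbitrary: r)
  case (Suc r')
  then have "row_offset T r' = length (T ! Suc r') + row_offset T (Suc r')"
    using row_offset_Suc by simp
  moreover have "r \<noteq> r' \<Longrightarrow> row_offset T r' + length (T ! r') \<le> row_offset T r"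
    using Suc by simp
  ultimately show ?case by (cases "r = r'") auto
qed simp

lemma row_offset_shape: "shape T = shape T' \<Longrightarrow> row_offset T r = row_offset T' r"
  unfolding row_offset_def shape_def by (metis drop_map)

lemma row_word_nth:
  assumes "r < length T" "c < length (T ! r)"
  shows "row_offset T r + c < length (row_word T) \<and> row_word T ! (row_offset T r + c) = T ! r ! c"
proof -
  have T: "T = take r T @ [T ! r] @ drop (Suc r) T" using assms by (simp add: id_take_nth_drop)
  have "row_word T = concat (rev (drop (Suc r) T)) @ T ! r @ concat (rev (take r T))"
    unfolding row_word_def by (subst T) simp
  moreover have "length (concat (rev (drop (Suc r) T))) = row_offset T r"
    unfolding row_offset_def by (simp add: length_concat rev_map[symmetric])
  ultimately show ?thesis using assms by (simp add: nth_append)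
qed

lemma set_row_word: "set (row_word T) = (\<Union>r<length T. set (T ! r))"
proof -
  have "set T = (\<lambda>r. T ! r) ` {..<length T}" by (auto simp: in_set_conv_nth)
  then show ?thesis by (simp add: row_word_def)
qed

lemma sorted_filter_by_index_of:
  assumes "distinct w"
    and "\<And>x y. P x \<Longrightarrow> P y \<Longrightarrow> x \<in> set w \<Longrightarrow> y \<in> set w \<Longrightarrow> x < y \<Longrightarrow> index_of w x < index_of w y"
  shows "sorted_wrt (<) (filter P w)"
proof -
  have "sorted_wrt (<) (filter (\<lambda>j. P (w ! j)) [0..<length w])"
    by (rule sorted_wrt_filter) simp
  then have "sorted_wrt (\<lambda>j k. w ! j < w ! k) (filter (\<lambda>j. P (w ! j)) [0..<length w])"
  proof (rule sorted_wrt_mono_rel[rotated])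
    fix j k assume jk: "j \<in> set (filter (\<lambda>j. P (w ! j)) [0..<length w])"
      "k \<in> set (filter (\<lambda>j. P (w ! j)) [0..<length w])" "j < k"
    then have "w ! j \<noteq> w ! k" using assms(1) by (simp add: nth_eq_iff_index_eq)
    moreover have "\<not> w ! k < w ! j"
      using assms(2)[of "w ! k" "w ! j"] jk index_of_nth[OF assms(1)] by auto
    ultimately show "w ! j < w ! k" by simp
  qed
  moreover have "filter P w = map ((!) w) (filter (\<lambda>j. P (w ! j)) [0..<length w])"
    by (subst map_nth[symmetric]) (simp add: filter_map comp_def)
  ultimately show ?thesis by (simp add: sorted_wrt_map)
qed

lemma std_word_map_nth:
  assumes "distinct w" "n < length w"
  shows "std_word (map g w) ! n =
     card ({x. g x < g (w ! n)} \<inter> set w) + card ({x. g x = g (w ! n)} \<inter> set (take (Suc n) w))"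
  using assms by (simp add: std_word_def take_map filter_map distinct_length_filter comp_def)

locale standard_tableau =
  fixes lam :: "nat list" and T :: "nat list list"
  assumes partition: "partition lam" and SYT: "T \<in> SYT lam"
begin

abbreviation "W \<equiv> row_word T"
abbreviation "N \<equiv> sum_list lam"

lemma shape_T: "shape T = lam" using SYT by (simp add: SYT_def)
lemma length_T: "length T = length lam" using shape_T unfolding shape_def by (metis length_map)
lemma distinct_W: "distinct W" using SYT by (simp add: SYT_def)
lemma set_W: "set W = {1..N}" using SYT by (simp add: SYT_def)
lemma length_W: "length W = N" using length_row_word shape_T by simp
lemma cols_strict_T: "cols_strict T" using SYT by (simp add: SYT_def)

lemma row_nonempty: "r < length T \<Longrightarrow> 0 < length (T ! r)"
proof -
  assume r: "r < length T"
  then have "length (T ! r) = lam ! r" using shape_T by (auto simp: shape_def)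
  then show ?thesis using partition r length_T nth_mem by (fastforce simp: partition_def)
qed

lemma row_less: "r < length T \<Longrightarrow> c < c' \<Longrightarrow> c' < length (T ! r) \<Longrightarrow> T ! r ! c < T ! r ! c'"
  using SYT sorted_wrt_nth_less by (fastforce simp: SYT_def)

lemma first_le_row: "r < length T \<Longrightarrow> c < length (T ! r) \<Longrightarrow> T ! r ! 0 \<le> T ! r ! c"
  using row_less[of r 0 c] by (cases c) auto

lemma first_col_less: "r < r' \<Longrightarrow> r' < length T \<Longrightarrow> T ! r ! 0 < T ! r' ! 0"
proof (induction r' arbitrary: r)
  case (Suc r')
  have step: "T ! r' ! 0 < T ! Suc r' ! 0"
    using cols_strict_T row_nonempty[OF Suc.prems(2)] Suc.prems(2) by (simp add: cols_strict_def)
  show ?case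
  proof (cases "r = r'")
    case False
    then have "T ! r ! 0 < T ! r' ! 0" using Suc by simp
    then show ?thesis using step by simp
  qed (use step in simp)
qed simp

lemma index_of_entry:
  "r < length T \<Longrightarrow> c < length (T ! r) \<Longrightarrow> index_of W (T ! r ! c) = row_offset T r + c"
  using row_word_nth index_of_nth[OF distinct_W] by metis

lemma entry_bounds: "r < length T \<Longrightarrow> c < length (T ! r) \<Longrightarrow> T ! r ! c \<in> {1..N}"
  using row_word_nth set_W by (metis nth_mem)

lemma entry_exists:
  assumes "x \<in> {1..N}"
  obtains r c where "r < length T" "c < length (T ! r)" "T ! r ! c = x"
proof -
  have "x \<in> (\<Union>r<length T. set (T ! r))" using assms set_W set_row_word by simp
  then show ?thesis using that by (auto simp: in_set_conv_nth)
qed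

lemma index_of_entry_less:
  assumes "r < length T" "c < length (T ! r)" "r' < length T" "c' < length (T ! r')"
    and "r' < r \<or> (r' = r \<and> c < c')"
  shows "index_of W (T ! r ! c) < index_of W (T ! r' ! c')"
  using assms row_offset_less[of r' r T] by (auto simp: index_of_entry)

lemma rowof_entry: "r < length T \<Longrightarrow> c < length (T ! r) \<Longrightarrow> rowof T (T ! r ! c) = r"
  unfolding rowof_def
proof (rule the_equality)
  assume rc: "r < length T" "c < length (T ! r)"
  then show "r < length T \<and> T ! r ! c \<in> set (T ! r)" by simp
  fix r' assume "r' < length T \<and> T ! r ! c \<in> set (T ! r')"
  then obtain c' where r'c': "r' < length T" "c' < length (T ! r')" "T ! r' ! c' = T ! r ! c"
    by (auto simp: in_set_conv_nth)
  show "r' = r"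
  proof (rule ccontr)
    assume "r' \<noteq> r"
    then show False
      using index_of_entry_less[OF rc r'c'(1,2)] index_of_entry_less[OF r'c'(1,2) rc] r'c'(3)
      by (cases "r' < r") auto
  qed
qed

lemma smaller_than_row_start:
  assumes r: "r < length T" and x: "x \<in> {1..N}" and less: "x < T ! r ! 0"
  obtains r' c' where "r' < r" "c' < length (T ! r')" "T ! r' ! c' = x"
proof -
  obtain r' c' where r'c': "r' < length T" "c' < length (T ! r')" "T ! r' ! c' = x"
    using entry_exists x by blast
  have "r' < r"
  proof (rule ccontr)
    assume "\<not> r' < r"
    then have "T ! r ! 0 \<le> T ! r' ! 0" using first_col_less[of r r'] r'c' by (cases "r = r'") auto
    also have "\<dots> \<le> x" using first_le_row r'c' by metis
    finally show False using less by simp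
  qed
  then show ?thesis using that r'c' by blast
qed

lemma row_start_index_of_less:
  assumes "r < length T" "x \<in> {1..N}" "x < T ! r ! 0"
  shows "index_of W (T ! r ! 0) < index_of W x"
proof -
  obtain r' c' where "r' < r" "c' < length (T ! r')" "T ! r' ! c' = x"
    using smaller_than_row_start assms by blast
  then show ?thesis using index_of_entry_less[of r 0 r' c'] assms row_nonempty by auto
qed

lemma index_of_less_if_not_descent:
  assumes "1 \<le> d" "Suc d \<le> N" "\<not> rowof T d < rowof T (Suc d)"
  shows "index_of W d < index_of W (Suc d)"
proof -
  obtain r1 c1 where rc1: "r1 < length T" "c1 < length (T ! r1)" "T ! r1 ! c1 = d"
    using entry_exists[of d] assms by auto
  obtain r2 c2 where rc2: "r2 < length T" "c2 < length (T ! r2)" "T ! r2 ! c2 = Suc d"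
    using entry_exists[of "Suc d"] assms by auto
  have "r2 \<le> r1" using assms rowof_entry rc1 rc2 by fastforce
  moreover have "c1 < c2" if "r2 = r1"
  proof (rule ccontr)
    assume "\<not> c1 < c2"
    then have "T ! r1 ! c2 \<le> T ! r1 ! c1" using row_less[of r1 c2 c1] rc1 rc2 that by (cases "c1 = c2") auto
    then show False using rc1 rc2 that by simp
  qed
  ultimately show ?thesis
    using index_of_entry_less[OF rc1(1,2) rc2(1,2)] rc1 rc2 by fastforce
qed

lemma index_of_less_if_no_descents:
  assumes "\<And>d. x \<le> d \<Longrightarrow> d < y \<Longrightarrow> \<not> rowof T d < rowof T (Suc d)"
    and "1 \<le> x" "x < y" "y \<le> N"
  shows "index_of W x < index_of W y"
  using assms
proof (induction y)
  case (Suc y)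
  have "index_of W y < index_of W (Suc y)" using index_of_less_if_not_descent Suc.prems by simp
  then show ?case using Suc by (cases "x = y") auto
qed simp

lemma row_start_pred_descent:
  assumes "0 < r" "r < length T"
  shows "T ! r ! 0 - 1 \<in> descents T"
proof -
  define x where "x = T ! r ! 0 - 1"
  have "T ! 0 ! 0 < T ! r ! 0" using first_col_less assms by simp
  moreover have "1 \<le> T ! 0 ! 0" using entry_bounds[of 0 0] row_nonempty[of 0] assms by fastforce
  moreover have "T ! r ! 0 \<le> N" using entry_bounds row_nonempty assms by simp
  ultimately have x: "x \<in> {1..N}" "Suc x = T ! r ! 0" "x < length W"
    using length_W x_def by auto
  obtain r' c' where r'c': "r' < r" "c' < length (T ! r')" "T ! r' ! c' = x"
    using smaller_than_row_start[OF assms(2) x(1)] x by auto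
  have "rowof T x = r'" using rowof_entry r'c' assms by fastforce
  moreover have "rowof T (Suc x) = r" using rowof_entry[OF assms(2) row_nonempty] x(2) assms by simp
  ultimately show ?thesis unfolding descents_def x_def[symmetric] using x r'c' by auto
qed

end

section \<open>Descent blocks\<close>

lemma map_diff_zip_tl:
  "map (\<lambda>(a, b). b - a) (zip (map f [0..<Suc n]) (tl (map f [0..<Suc n])))
     = map (\<lambda>j. f (Suc j) - f j) [0..<n]"
  by (rule nth_equalityI) (auto simp: nth_tl simp del: upt_Suc)

locale cs_vertex = standard_tableau +
  assumes length_Des_T: "length (Des T) = length lam"
begin

abbreviation "ell \<equiv> length lam"

lemma finite_descents: "finite (descents T)"
  unfolding descents_def by simp

lemma length_Des: "length (Des T) = card (descents T) + 1"
  by (simp add: Des_def Let_def finite_descents)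

lemma card_descents: "card (descents T) = ell - 1"
  using length_Des length_Des_T by simp

lemma ell_pos: "0 < ell"
  using length_Des length_Des_T by simp

lemma descents_eq_row_starts: "descents T = (\<lambda>r. T ! r ! 0 - 1) ` {1..<ell}"
proof -
  \<comment> \<open>every later row start yields a descent, and there are only \<open>\<ell> - 1\<close> descents\<close>
  have sub: "(\<lambda>r. T ! r ! 0 - 1) ` {1..<ell} \<subseteq> descents T"
    using row_start_pred_descent length_T by auto
  have "inj_on (\<lambda>r. T ! r ! 0 - 1) {1..<ell}"
  proof (rule inj_onI)
    fix r r' assume rr': "r \<in> {1..<ell}" "r' \<in> {1..<ell}" "T ! r ! 0 - 1 = T ! r' ! 0 - 1"
    have "1 \<le> T ! r ! 0" "1 \<le> T ! r' ! 0" using entry_bounds row_nonempty rr' length_T by auto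
    then have "T ! r ! 0 = T ! r' ! 0" using rr' by simp
    then show "r = r'" using first_col_less rr' length_T by (metis atLeastLessThan_iff linorder_neqE_nat less_irrefl)
  qed
  then have "card ((\<lambda>r. T ! r ! 0 - 1) ` {1..<ell}) = card (descents T)"
    using card_image card_descents by fastforce
  then show ?thesis using card_subset_eq[OF finite_descents sub] by simp
qed

(* block_end j = \<alpha>_1 + ... + \<alpha>_j = max \<alpha>^(j), where \<alpha> = Des T *)
definition block_end :: "nat \<Rightarrow> nat" where
  "block_end j = (if j = 0 then 0 else if j < ell then T ! j ! 0 - 1 else N)"

lemma block_end_less_Suc: "j < ell \<Longrightarrow> block_end j < block_end (Suc j)"
proof -
  assume j: "j < ell"
  have bounds: "1 \<le> T ! r ! 0 \<and> T ! r ! 0 \<le> N" if "r < ell" for r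
    using entry_bounds row_nonempty length_T that by simp
  show ?thesis
  proof (cases "Suc j < ell")
    case True
    then have "T ! 0 ! 0 < T ! Suc j ! 0" "T ! j ! 0 < T ! Suc j ! 0"
      using first_col_less length_T by auto
    moreover have "1 \<le> T ! 0 ! 0" "1 \<le> T ! j ! 0" using bounds[of 0] bounds[of j] True by fastforce+
    ultimately show ?thesis using True unfolding block_end_def by auto
  next
    case False
    then show ?thesis using j bounds[of j] unfolding block_end_def by auto
  qed
qed

lemma block_end_le_Suc: "block_end j \<le> block_end (Suc j)"
  using block_end_less_Suc[of j] by (cases "j < ell") (auto simp: block_end_def)

lemma block_end_mono: "j \<le> j' \<Longrightarrow> block_end j \<le> block_end j'"
  by (rule lift_Suc_mono_le[of block_end, OF block_end_le_Suc])

lemma block_end_strict_mono: "j < j' \<Longrightarrow> j' \<le> ell \<Longrightarrow> block_end j < block_end j'"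
proof (induction j')
  case (Suc j')
  then show ?case using block_end_less_Suc[of j'] by (cases "j = j'") auto
qed simp

lemma block_end_less_iff: "j' \<le> ell \<Longrightarrow> block_end j < block_end j' \<longleftrightarrow> j < j'"
  using block_end_mono[of j' j] block_end_strict_mono[of j j'] by (cases "j < j'") auto

lemma between_block_ends:
  "k \<le> ell \<Longrightarrow> k' \<le> ell \<Longrightarrow> block_end k \<le> block_end r \<Longrightarrow> block_end r < block_end k'
    \<Longrightarrow> k \<le> r \<and> r < k'"
  using block_end_less_iff[of k r] block_end_less_iff[of k' r] by linarith

lemma block_end_0: "block_end 0 = 0" by (simp add: block_end_def)
lemma block_end_ell: "block_end ell = N" by (simp add: block_end_def)
lemma block_end_row: "0 < r \<Longrightarrow> r < ell \<Longrightarrow> block_end r = T ! r ! 0 - 1" by (simp add: block_end_def)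

lemma sorted_list_of_descents: "sorted_list_of_set (descents T) = map block_end [1..<ell]"
proof -
  have "sorted_wrt (<) (map block_end [1..<ell])"
    unfolding sorted_wrt_map
    by (rule sorted_wrt_mono_rel[OF _ sorted_wrt_upt]) (use block_end_strict_mono in auto)
  moreover have "block_end ` {1..<ell} = (\<lambda>r. T ! r ! 0 - 1) ` {1..<ell}"
    by (rule image_cong) (auto simp: block_end_def)
  then have "set (map block_end [1..<ell]) = descents T" using descents_eq_row_starts by simp
  moreover have "length (map block_end [1..<ell]) = card (descents T)" using card_descents by simp
  ultimately show ?thesis
    using sorted_list_of_set_unique[OF finite_descents, of "map block_end [1..<ell]"] by simp
qed

lemma Des_eq: "Des T = map (\<lambda>j. block_end (Suc j) - block_end j) [0..<ell]"
proof -
  have "[0..<Suc ell] = 0 # [1..<ell] @ [ell]" using ell_pos upt_conv_Cons[of 0 ell] by simp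
  then have bs: "0 # sorted_list_of_set (descents T) @ [length W] = map block_end [0..<Suc ell]"
    unfolding sorted_list_of_descents using block_end_0 block_end_ell length_W by simp
  show ?thesis unfolding Des_def Let_def bs map_diff_zip_tl ..
qed

lemma sum_take_Des: "sum_list (take j (Des T)) = block_end (min j ell)"
proof (induction j)
  case (Suc j)
  show ?case
  proof (cases "j < ell")
    case True
    then have "take (Suc j) (Des T) = take j (Des T) @ [block_end (Suc j) - block_end j]"
      unfolding Des_eq by (simp add: take_Suc_conv_app_nth)
    then show ?thesis using Suc True block_end_less_Suc[of j] by simp
  next
    case False
    then show ?thesis using Suc Des_eq by simp
  qed
qed (simp add: block_end_0)

lemma comp_block_eq: "comp_block (Des T) j = {block_end (min (j - 1) ell) + 1 .. block_end (min j ell)}"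
  unfolding comp_block_def sum_take_Des ..

lemma in_some_comp_block:
  assumes x: "x \<in> {1..N}"
  obtains k where "1 \<le> k" "x \<in> comp_block (Des T) k"
proof -
  define k where "k = (LEAST k. x \<le> block_end k)"
  have "x \<le> block_end ell" using x block_end_ell by simp
  then have k: "x \<le> block_end k" "k \<le> ell" unfolding k_def by (auto intro: LeastI Least_le)
  then have "k \<noteq> 0" using x block_end_0 by (intro notI) simp
  moreover have "\<not> x \<le> block_end (k - 1)"
    using not_less_Least[of "k - 1" "\<lambda>k. x \<le> block_end k"] \<open>k \<noteq> 0\<close> by (simp add: k_def)
  ultimately show ?thesis using that[of k] k by (auto simp: comp_block_eq)
qed

lemma comp_block_unique:
  assumes "x \<in> comp_block (Des T) k1" "x \<in> comp_block (Des T) k2" "1 \<le> k1" "1 \<le> k2"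
  shows "k1 = k2"
proof -
  have False if "a < b" "x \<in> comp_block (Des T) a" "x \<in> comp_block (Des T) b" "1 \<le> a" for a b
  proof -
    have "block_end (min a ell) \<le> block_end (min (b - 1) ell)" using that by (intro block_end_mono) auto
    then show False using that by (auto simp: comp_block_eq)
  qed
  then show ?thesis using assms by (metis linorder_neqE_nat)
qed

lemma blockof_eq_iff:
  assumes "x \<in> {1..N}" "1 \<le> k"
  shows "blockof (Des T) x = k \<longleftrightarrow> x \<in> comp_block (Des T) k"
proof -
  obtain k0 where k0: "1 \<le> k0" "x \<in> comp_block (Des T) k0" using in_some_comp_block assms by blast
  have "1 \<le> blockof (Des T) x \<and> x \<in> comp_block (Des T) (blockof (Des T) x)"
    unfolding blockof_def by (rule LeastI[of _ k0]) (use k0 in simp)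
  then show ?thesis using comp_block_unique assms by blast
qed

lemma index_of_less_in_block:
  assumes "k \<le> ell" "block_end (k - 1) < x" "x < y" "y \<le> block_end k"
  shows "index_of W x < index_of W y"
proof (rule index_of_less_if_no_descents)
  fix d assume d: "x \<le> d" "d < y"
  have "d \<notin> descents T"
  proof
    assume "d \<in> descents T"
    then obtain r where r: "1 \<le> r" "r < ell" "d = block_end r"
      using descents_eq_row_starts block_end_row by auto
    then have "block_end (k - 1) < block_end r" "block_end r < block_end k" using assms d by auto
    then have "k - 1 < r" "r < k" using block_end_less_iff r assms by auto
    then show False by simp
  qed
  moreover have "d < N" using d assms block_end_mono[of k ell] block_end_ell by simp
  ultimately show "\<not> rowof T d < rowof T (Suc d)" using d assms length_W by (auto simp: descents_def)
qed (use assms block_end_mono[of k ell] block_end_ell in auto)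

end

section \<open>Insertion of two increasing runs\<close>

lemma insertion_tableau_snoc: "insertion_tableau (xs @ [x]) = row_ins x (insertion_tableau xs)"
  by (simp add: insertion_tableau_def)

lemma row_ins_low_letter:
  assumes "\<forall>y\<in>set A. y < x" "\<forall>y\<in>set Q. x < y" "sorted_wrt (<) (B @ Q)"
  shows "row_ins x ((A @ Q) # (if B = [] then [] else [B])) =
           (A @ x # tl Q) # (if B @ take 1 Q = [] then [] else [B @ take 1 Q])"
proof (cases Q)
  case Nil
  have "\<forall>y\<in>set A. y \<le> x" using assms(1) by auto
  then show ?thesis using Nil by simp
next
  case (Cons q Q')
  have "takeWhile (\<lambda>y. y \<le> x) (A @ q # Q') = A" "dropWhile (\<lambda>y. y \<le> x) (A @ q # Q') = q # Q'"
    using assms Cons by (simp_all add: takeWhile_append2 dropWhile_append2 less_imp_le)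
  moreover have "row_ins q (if B = [] then [] else [B]) = [B @ [q]]"
    using assms(3) Cons by (auto simp: sorted_wrt_append less_imp_le)
  ultimately show ?thesis using Cons by (simp add: Let_def)
qed

lemma insertion_tableau_two_runs:
  fixes p i :: nat
  defines "\<kappa> \<equiv> \<lambda>x. if x \<le> p then i else Suc i"
  assumes "sorted_wrt (<) (filter (\<lambda>x. x \<le> p) u)" "sorted_wrt (<) (filter (\<lambda>x. p < x) u)"
  shows "\<exists>B Q. filter (\<lambda>x. p < x) u = B @ Q \<and> length Q = length (snd (brk i (map \<kappa> u)))
     \<and> insertion_tableau u =
           (if u = [] then [] else (filter (\<lambda>x. x \<le> p) u @ Q) # (if B = [] then [] else [B]))"
  using assms(2,3)
proof (induction u rule: rev_induct)
  case Nil
  then show ?case by (simp add: insertion_tableau_def brk_def)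
next
  case (snoc x u)
  show ?case
  proof (cases "u = []")
    case True
    then show ?thesis
      by (intro exI[of _ "[]"] exI[of _ "if x \<le> p then [] else [x]"])
        (simp add: insertion_tableau_def brk_def brk_step_def \<kappa>_def)
  next
    case u_ne: False
    have "sorted_wrt (<) (filter (\<lambda>x. x \<le> p) u)" "sorted_wrt (<) (filter (\<lambda>x. p < x) u)"
      using snoc.prems by (auto simp: sorted_wrt_append)
    then obtain B Q where highs: "filter (\<lambda>x. p < x) u = B @ Q"
      and len_Q: "length Q = length (snd (brk i (map \<kappa> u)))"
      and tab: "insertion_tableau u = (filter (\<lambda>x. x \<le> p) u @ Q) # (if B = [] then [] else [B])"
      using snoc.IH u_ne by auto
    have brk_ux: "brk i (map \<kappa> (u @ [x])) = brk_step i (length u) (\<kappa> x) (brk i (map \<kappa> u))"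
      using brk_snoc[of i "map \<kappa> u" "\<kappa> x"] by simp
    have Q_high: "\<forall>y\<in>set Q. p < y" using highs by (metis Un_iff mem_Collect_eq set_append set_filter)
    show ?thesis
    proof (cases "x \<le> p")
      case True
      have "\<forall>y\<in>set (filter (\<lambda>x. x \<le> p) u). y < x"
        using snoc.prems(1) True by (simp add: sorted_wrt_append)
      moreover have "\<forall>y\<in>set Q. x < y" using Q_high True by auto
      moreover have "sorted_wrt (<) (B @ Q)" using snoc.prems highs by (auto simp: sorted_wrt_append)
      ultimately have "insertion_tableau (u @ [x]) = (filter (\<lambda>x. x \<le> p) u @ x # tl Q) #
          (if B @ take 1 Q = [] then [] else [B @ take 1 Q])"
        using tab row_ins_low_letter by (simp add: insertion_tableau_snoc del: row_ins.simps)
      moreover have "length (snd (brk i (map \<kappa> (u @ [x])))) = length (tl Q)"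
        using brk_ux True len_Q
        by (cases "brk i (map \<kappa> u)") (auto simp: brk_step_def \<kappa>_def split: list.split)
      moreover have "filter (\<lambda>x. p < x) (u @ [x]) = (B @ take 1 Q) @ tl Q"
        using highs True by (cases Q) auto
      ultimately show ?thesis using True by (intro exI[of _ "B @ take 1 Q"] exI[of _ "tl Q"]) simp
    next
      case False
      have "\<forall>y\<in>set (filter (\<lambda>x. x \<le> p) u @ Q). y \<le> x"
        using snoc.prems(2) False highs Q_high by (auto simp: sorted_wrt_append)
      then have "insertion_tableau (u @ [x]) = (filter (\<lambda>x. x \<le> p) u @ Q @ [x]) #
          (if B = [] then [] else [B])"
        using tab by (simp add: insertion_tableau_snoc)
      moreover have "length (snd (brk i (map \<kappa> (u @ [x])))) = length (Q @ [x])"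
        using brk_ux False len_Q by (cases "brk i (map \<kappa> u)") (auto simp: brk_step_def \<kappa>_def)
      ultimately show ?thesis using False highs by (intro exI[of _ B] exI[of _ "Q @ [x]"]) simp
    qed
  qed
qed

lemma two_runs_dyck_tableau:
  assumes "sorted_wrt (<) (filter (\<lambda>x. x \<le> p) u)" "sorted_wrt (<) (filter (\<lambda>x. p < x) u)"
    and tab: "insertion_tableau u = [[i..<i + m + 1], [i + m + 1..<i + 2 * m + 1]]" and m: "1 \<le> m"
  shows "p = i + m" and "snd (brk i (map (\<lambda>x. if x \<le> p then i else Suc i) u)) = []"
proof -
  obtain B Q where highs: "filter (\<lambda>x. p < x) u = B @ Q"
    and len_Q: "length Q = length (snd (brk i (map (\<lambda>x. if x \<le> p then i else Suc i) u)))"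
    and tab': "insertion_tableau u = (if u = [] then [] else
                 (filter (\<lambda>x. x \<le> p) u @ Q) # (if B = [] then [] else [B]))"
    using insertion_tableau_two_runs[OF assms(1,2), of i] by blast
  have "u \<noteq> []" using tab tab' by auto
  then have rows: "filter (\<lambda>x. x \<le> p) u @ Q = [i..<i + m + 1]" "B = [i + m + 1..<i + 2 * m + 1]"
    using tab tab' by (auto split: if_splits)
  have "Q = []"
  proof (rule ccontr)
    assume "Q \<noteq> []"
    then obtain q Q' where q: "Q = q # Q'" by (cases Q) auto
    have "q \<in> set [i..<i + m + 1]" using rows(1) q by (metis in_set_conv_decomp)
    then have "q \<le> i + m" by auto
    moreover have "i + 2 * m < q"
      using assms(2) highs rows(2) q m by (auto simp: sorted_wrt_append)
    ultimately show False by simp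
  qed
  then have "i + m \<in> set (filter (\<lambda>x. x \<le> p) u)" using rows(1) by simp
  then have "i + m \<le> p" by simp
  moreover have "i + m + 1 \<in> set B" using rows(2) m by auto
  then have "i + m + 1 \<in> set (filter (\<lambda>x. p < x) u)" using highs by (metis Un_iff set_append)
  then have "p < i + m + 1" by simp
  ultimately show "p = i + m" by simp
  show "snd (brk i (map (\<lambda>x. if x \<le> p then i else Suc i) u)) = []" using len_Q \<open>Q = []\<close> by simp
qed

section \<open>An edge inside two adjacent blocks\<close>

locale dyck_edge = cs_vertex lam T
  for lam T +
  fixes T' :: "nat list list" and I :: "nat set" and i j m :: nat and c' :: "nat list list"
  assumes T'_vertex: "T' \<in> CS_vert lam"
    and i_pos: "1 \<le> i" and i_bound: "i + 1 \<le> length (Des T)"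
    and I_sub: "I \<subseteq> comp_block (Des T) i \<union> comp_block (Des T) (i + 1)"
    and I_eq: "I = {j..j + 2 * m}"
    and dyck: "dyck_pattern (row_word T) j m"
    and f_collapse: "tab_f j (dyck_collapse j m T) = Some c'"
    and T'_eq: "T' = std c'"
begin

definition lo where "lo = block_end (i - 1) + 1"
definition mid where "mid = block_end i"
definition hi where "hi = block_end (i + 1)"

lemma i_less_ell: "i < ell" using i_bound length_Des_T by simp

lemma comp_block_i: "comp_block (Des T) i = {lo..mid}"
  using i_less_ell unfolding lo_def mid_def by (simp add: comp_block_eq)

lemma comp_block_Suc_i: "comp_block (Des T) (i + 1) = {mid + 1..hi}"
  using i_less_ell unfolding hi_def mid_def by (simp add: comp_block_eq)

lemma lo_le_mid: "lo \<le> mid"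
  using block_end_strict_mono[of "i - 1" i] i_less_ell i_pos unfolding lo_def mid_def by simp

lemma mid_less_hi: "mid < hi"
  using block_end_strict_mono[of i "i + 1"] i_less_ell unfolding hi_def mid_def by simp

lemma hi_le_N: "hi \<le> N"
  using block_end_mono[of "i + 1" ell] i_less_ell block_end_ell unfolding hi_def by simp

lemma m_pos: "1 \<le> m" and j_pos: "1 \<le> j"
  and dyck_tableau: "insertion_tableau (filter (\<lambda>x. x \<in> {j..j + 2 * m}) W)
                       = [[j..<j + m + 1], [j + m + 1..<j + 2 * m + 1]]"
  using dyck unfolding dyck_pattern_def by auto

lemma I_bounds: "lo \<le> j" "j + 2 * m \<le> hi"
proof -
  have "j \<in> I" "j + 2 * m \<in> I" using I_eq by auto
  then have "j \<in> {lo..mid} \<union> {mid + 1..hi}" "j + 2 * m \<in> {lo..mid} \<union> {mid + 1..hi}"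
    using I_sub comp_block_i comp_block_Suc_i by blast+
  then show "lo \<le> j" "j + 2 * m \<le> hi" using lo_le_mid mid_less_hi by auto
qed

lemma mid_Suc_row_start: "mid + 1 = T ! i ! 0"
  using block_end_row[of i] i_pos i_less_ell entry_bounds[of i 0] row_nonempty length_T
  unfolding mid_def by simp

lemma index_of_less_lower: "lo \<le> x \<Longrightarrow> x < y \<Longrightarrow> y \<le> mid \<Longrightarrow> index_of W x < index_of W y"
  using index_of_less_in_block[of i x y] i_less_ell unfolding lo_def mid_def by simp

lemma index_of_less_upper: "mid < x \<Longrightarrow> x < y \<Longrightarrow> y \<le> hi \<Longrightarrow> index_of W x < index_of W y"
  using index_of_less_in_block[of "i + 1" x y] i_less_ell unfolding mid_def hi_def by simp

definition collapse :: "nat \<Rightarrow> nat" where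
  "collapse x = (if j \<le> x \<and> x \<le> j + m then j else if j + m + 1 \<le> x \<and> x \<le> j + 2 * m then j + 1 else x)"

definition dyck_word where "dyck_word = filter (\<lambda>x. x \<in> {j..j + 2 * m}) W"

abbreviation "collapsed_word \<equiv> map collapse W"

lemma row_word_dyck_collapse: "row_word (dyck_collapse j m T) = collapsed_word"
  unfolding dyck_collapse_def row_word_map collapse_def by simp

lemma shape_dyck_collapse: "shape (dyck_collapse j m T) = lam"
  unfolding dyck_collapse_def shape_map using shape_T .

lemma dyck_word_two_runs:
  "mid = j + m" "snd (brk j (map (\<lambda>x. if x \<le> mid then j else Suc j) dyck_word)) = []"
proof -
  have "sorted_wrt (<) (filter (\<lambda>x. x \<le> mid) dyck_word)"
    unfolding dyck_word_def filter_filter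
    by (rule sorted_filter_by_index_of[OF distinct_W]) (use index_of_less_lower I_bounds in auto)
  moreover have "sorted_wrt (<) (filter (\<lambda>x. mid < x) dyck_word)"
    unfolding dyck_word_def filter_filter
    by (rule sorted_filter_by_index_of[OF distinct_W]) (use index_of_less_upper I_bounds in auto)
  ultimately show "mid = j + m" "snd (brk j (map (\<lambda>x. if x \<le> mid then j else Suc j) dyck_word)) = []"
    using two_runs_dyck_tableau[OF _ _ dyck_tableau[folded dyck_word_def] m_pos] by simp_all
qed

lemma mid_eq: "mid = j + m" by (rule dyck_word_two_runs(1))

lemma collapse_eq_j_iff: "collapse x = j \<longleftrightarrow> x \<in> {j..mid}"
  using m_pos mid_eq unfolding collapse_def by auto

lemma collapse_eq_Suc_j_iff: "collapse x = Suc j \<longleftrightarrow> x \<in> {mid + 1..mid + m}"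
  using m_pos mid_eq unfolding collapse_def by auto

lemma snd_brk_collapsed: "snd (brk j collapsed_word) = []"
proof -
  have "filter (\<lambda>y. y = j \<or> y = Suc j) collapsed_word
          = map collapse (filter (\<lambda>x. collapse x = j \<or> collapse x = Suc j) W)"
    by (simp add: filter_map comp_def)
  also have "filter (\<lambda>x. collapse x = j \<or> collapse x = Suc j) W = dyck_word"
    unfolding dyck_word_def using collapse_eq_j_iff collapse_eq_Suc_j_iff mid_eq
    by (intro filter_cong) auto
  also have "map collapse dyck_word = map (\<lambda>x. if x \<le> mid then j else Suc j) dyck_word"
    unfolding dyck_word_def using mid_eq by (intro map_cong) (auto simp: collapse_def)
  finally show ?thesis
    using length_brk_filter[of j collapsed_word] dyck_word_two_runs(2) by simp
qed

abbreviation "seen n \<equiv> set (take n W)"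

lemma seen_subset: "seen n \<subseteq> {1..N}" using set_W set_take_subset[of n W] by simp

lemma seen_N: "seen N = {1..N}" using set_W length_W by simp

lemma in_seen_iff: "y \<in> {1..N} \<Longrightarrow> y \<in> seen n \<longleftrightarrow> index_of W y < n"
  using in_set_take_iff_index_of[OF distinct_W] set_W by simp

lemma mid_m_le_N: "mid + m \<le> N" using mid_eq I_bounds hi_le_N by simp

lemma excess_collapsed:
  "excess j (take n collapsed_word)
     = int (card ({j..mid} \<inter> seen n)) - int (card ({mid + 1..mid + m} \<inter> seen n))"
proof -
  have "{x. collapse x = j} = {j..mid}" "{x. collapse x = Suc j} = {mid + 1..mid + m}"
    using collapse_eq_j_iff collapse_eq_Suc_j_iff by auto
  then show ?thesis using excess_take_map[OF distinct_W, of j n collapse] by simp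
qed

lemma excess_collapsed_total: "excess j collapsed_word = 1"
proof -
  have "{j..mid} \<inter> seen N = {j..mid}" "{mid + 1..mid + m} \<inter> seen N = {mid + 1..mid + m}"
    using seen_N j_pos mid_m_le_N by auto
  then show ?thesis using excess_collapsed[of N] length_W mid_eq by simp
qed

lemma length_fst_brk_collapsed: "length (fst (brk j collapsed_word)) = 1"
  using length_brk_max_excess[of j collapsed_word] snd_brk_collapsed excess_collapsed_total by simp

(* f_j acts on the collapsed tableau at position k0 of its reading word, where T has x0 *)
definition k0 where "k0 = last (fst (brk j collapsed_word))"
definition x0 where "x0 = W ! k0"

lemma fst_brk_collapsed_ne: "fst (brk j collapsed_word) \<noteq> []"
  using length_fst_brk_collapsed by auto

lemma k0_less_N: "k0 < N"
  using brk_last_unbracketed(1)[OF fst_brk_collapsed_ne k0_def] length_W by simp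

lemma x0_in_N: "x0 \<in> {1..N}" using k0_less_N length_W set_W x0_def nth_mem by metis

lemma x0_bounds: "x0 \<in> {j..mid}"
  using brk_last_unbracketed(2)[OF fst_brk_collapsed_ne k0_def] collapse_eq_j_iff k0_less_N length_W
  unfolding x0_def by simp

lemma index_of_x0: "index_of W x0 = k0"
  unfolding x0_def using index_of_nth distinct_W k0_less_N length_W by simp

lemma excess_collapsed_upto_k0: "excess j (take (Suc k0) collapsed_word) = 1"
  using length_brk_max_excess[of j "take (Suc k0) collapsed_word"] length_fst_brk_collapsed
    brk_take_last_unbracketed[OF fst_brk_collapsed_ne k0_def] by simp

definition raise :: "nat \<Rightarrow> nat" where "raise x = (if x = x0 then Suc j else collapse x)"

lemma raised_word: "collapsed_word[k0 := Suc j] = map raise W"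
proof (rule nth_equalityI)
  fix n assume "n < length (collapsed_word[k0 := Suc j])"
  then have "n < length W" by simp
  then have "W ! n = x0 \<longleftrightarrow> n = k0"
    using x0_def distinct_W k0_less_N length_W by (auto simp: nth_eq_iff_index_eq)
  then show "collapsed_word[k0 := Suc j] ! n = map raise W ! n" using \<open>n < length W\<close> by (simp add: raise_def)
qed simp

lemma row_word_T': "row_word T' = std_word (map raise W)"
proof -
  have "word_f j collapsed_word = Some (collapsed_word[k0 := Suc j])"
    unfolding word_f_def Let_def k0_def using fst_brk_collapsed_ne by simp
  then have "c' = reshape lam (map raise W)"
    using f_collapse raised_word unfolding tab_f_def row_word_dyck_collapse shape_dyck_collapse by simp
  moreover have "length (map raise W) = N" "length (std_word (map raise W)) = N"
    using length_W by (simp_all add: std_word_def)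
  ultimately show ?thesis
    using T'_eq row_word_reshape shape_reshape unfolding std_def by simp
qed

abbreviation "W' \<equiv> row_word T'"

lemma std_value:
  assumes "x \<in> {1..N}"
  shows "W' ! index_of W x =
    card ({y. raise y < raise x} \<inter> {1..N}) + card ({y. raise y = raise x} \<inter> seen (Suc (index_of W x)))"
  using std_word_map_nth[OF distinct_W, of "index_of W x" raise] index_of_in[OF distinct_W] assms set_W
  unfolding row_word_T' by simp

lemma raise_outside_I: "y \<notin> {j..j + 2 * m} \<Longrightarrow> raise y = y"
  using x0_bounds mid_eq unfolding raise_def collapse_def by auto

lemma raise_inside_I: "y \<in> {j..j + 2 * m} \<Longrightarrow> raise y = j \<or> raise y = Suc j"
  unfolding raise_def collapse_def by auto

lemma std_value_outside_I:
  assumes x: "x \<in> {1..N}" "x \<notin> {j..j + 2 * m}"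
  shows "W' ! index_of W x = x"
proof -
  have "raise y < x \<longleftrightarrow> y < x" "raise y = x \<longleftrightarrow> y = x" for y
    using raise_outside_I[of y] raise_inside_I[of y] x m_pos by (cases "y \<in> {j..j + 2 * m}"; auto)+
  then have "{y. raise y < raise x} \<inter> {1..N} = {1..<x}"
    and "{y. raise y = raise x} \<inter> seen (Suc (index_of W x)) = {x}"
    using x raise_outside_I in_seen_iff by auto
  then show ?thesis using std_value[OF x(1)] x by simp
qed

lemma raise_less_Suc_j_iff: "raise y < Suc j \<longleftrightarrow> y \<le> mid \<and> y \<noteq> x0"
  using m_pos unfolding raise_def collapse_def mid_eq by auto

lemma raise_eq_Suc_j_iff: "raise y = Suc j \<longleftrightarrow> y = x0 \<or> y \<in> {mid + 1..mid + m}"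
  using collapse_eq_Suc_j_iff unfolding raise_def by auto

lemma card_raise_less_Suc_j: "card ({y. raise y < Suc j} \<inter> {1..N}) = mid - 1"
proof -
  have "{y. raise y < Suc j} \<inter> {1..N} = {1..mid} - {x0}"
  proof (intro set_eqI)
    fix y
    show "y \<in> {y. raise y < Suc j} \<inter> {1..N} \<longleftrightarrow> y \<in> {1..mid} - {x0}"
      using raise_less_Suc_j_iff[of y] mid_m_le_N by auto
  qed
  moreover have "x0 \<in> {1..mid}" using x0_bounds j_pos by auto
  ultimately show ?thesis by simp
qed

lemma std_value_x0_bounds: "mid \<le> W' ! k0 \<and> W' ! k0 \<le> mid + m"
proof -
  let ?C = "{y. raise y = Suc j} \<inter> seen (Suc k0)"
  have "W' ! k0 = (mid - 1) + card ?C"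
    using std_value[OF x0_in_N] index_of_x0 card_raise_less_Suc_j by (simp add: raise_def)
  moreover have "x0 \<in> ?C" using in_seen_iff x0_in_N index_of_x0 by (simp add: raise_def)
  then have "0 < card ?C" using card_gt_0_iff[of ?C] by blast
  moreover have "card ?C \<le> m + 1"
  proof -
    have "?C \<subseteq> insert x0 {mid + 1..mid + m}" using raise_eq_Suc_j_iff by auto
    then have "card ?C \<le> card (insert x0 {mid + 1..mid + m})" by (intro card_mono) auto
    then show ?thesis by (simp add: card_insert_if split: if_splits)
  qed
  moreover have "1 \<le> mid" using mid_eq j_pos by simp
  ultimately show ?thesis by linarith
qed

lemma index_of_mid_Suc_less_k0: "index_of W (mid + 1) < k0"
  using row_start_index_of_less[of i x0] x0_in_N x0_bounds mid_Suc_row_start i_less_ell length_T index_of_x0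
  by simp

lemma std_value_mid_Suc: "W' ! index_of W (mid + 1) = mid"
proof -
  have in_N: "mid + 1 \<in> {1..N}" using mid_m_le_N m_pos by simp
  have raise: "raise (mid + 1) = Suc j" using raise_eq_Suc_j_iff[of "mid + 1"] m_pos by simp
  have "{y. raise y = Suc j} \<inter> seen (Suc (index_of W (mid + 1))) = {mid + 1}"
  proof (intro set_eqI iffI)
    fix y assume y: "y \<in> {y. raise y = Suc j} \<inter> seen (Suc (index_of W (mid + 1)))"
    then have "y \<in> {1..N}" "index_of W y \<le> index_of W (mid + 1)"
      using seen_subset in_seen_iff by (blast, fastforce)
    moreover have "y = x0 \<or> y \<in> {mid + 1..mid + m}" using y raise_eq_Suc_j_iff by simp
    ultimately show "y \<in> {mid + 1}"
      using index_of_mid_Suc_less_k0 index_of_x0 index_of_less_upper[of "mid + 1" y] I_bounds mid_eq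
      by (cases "y = mid + 1") auto
  qed (use raise in_N in_seen_iff in simp)
  then show ?thesis using std_value[OF in_N] raise card_raise_less_Suc_j mid_eq j_pos by simp
qed

lemma x0_ne_lo: "lo = j \<Longrightarrow> x0 \<noteq> lo"
proof
  assume lo: "lo = j" and x0: "x0 = lo"
  have "mid + 1 \<in> {mid + 1..mid + m} \<inter> seen (Suc k0)"
    using in_seen_iff mid_m_le_N m_pos index_of_mid_Suc_less_k0 by simp
  then have "0 < card ({mid + 1..mid + m} \<inter> seen (Suc k0))"
    using card_gt_0_iff[of "{mid + 1..mid + m} \<inter> seen (Suc k0)"] by blast
  then have "2 \<le> card ({j..mid} \<inter> seen (Suc k0))"
    using excess_collapsed_upto_k0 excess_collapsed[of "Suc k0"] by simp
  moreover have "{j..mid} \<inter> seen (Suc k0) \<subseteq> {lo}"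
  proof
    fix y assume y: "y \<in> {j..mid} \<inter> seen (Suc k0)"
    then have "y \<in> {1..N}" using seen_subset by blast
    then have "index_of W y \<le> index_of W lo" using y in_seen_iff[of y "Suc k0"] x0 index_of_x0 by simp
    then show "y \<in> {lo}" using y lo index_of_less_lower[of lo y] by (cases "y = lo") auto
  qed
  then have "card ({j..mid} \<inter> seen (Suc k0)) \<le> 1" using card_mono[of "{lo}"] by fastforce
  ultimately show False by simp
qed

lemma std_value_lo:
  assumes lo: "lo = j"
  shows "W' ! index_of W lo = lo"
proof -
  have in_N: "lo \<in> {1..N}" using j_pos mid_m_le_N lo_le_mid lo by simp
  have raise: "raise lo = j" using x0_ne_lo lo lo_le_mid mid_eq by (simp add: raise_def collapse_def)
  have less_j: "raise y < j \<longleftrightarrow> y < j" for y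
    using x0_bounds by (cases "y = x0") (auto simp: raise_def collapse_def)
  have "{y. raise y < raise lo} \<inter> {1..N} = {1..<j}"
  proof (intro set_eqI)
    fix y
    show "y \<in> {y. raise y < raise lo} \<inter> {1..N} \<longleftrightarrow> y \<in> {1..<j}"
      unfolding raise using less_j[of y] in_N lo by auto
  qed
  moreover have "{y. raise y = j} \<inter> seen (Suc (index_of W lo)) = {lo}"
  proof (intro set_eqI iffI)
    fix y assume y: "y \<in> {y. raise y = j} \<inter> seen (Suc (index_of W lo))"
    then have "y \<in> {1..N}" "index_of W y \<le> index_of W lo"
      using seen_subset in_seen_iff by (blast, fastforce)
    moreover have "y \<in> {j..mid}"
      using y x0_bounds collapse_eq_j_iff by (cases "y = x0") (auto simp: raise_def)
    ultimately show "y \<in> {lo}" using lo index_of_less_lower[of lo y] by (cases "y = lo") auto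
  qed (use raise in_N in_seen_iff in simp)
  ultimately show ?thesis using std_value[OF in_N] raise lo j_pos by simp
qed

lemma cs_vertex_T': "cs_vertex lam T'"
  using T'_vertex partition by unfold_locales (auto simp: CS_vert_def)

lemma row_start_T':
  assumes r: "r < ell"
  shows "T' ! r ! 0 = W' ! index_of W (T ! r ! 0)"
proof -
  interpret T': cs_vertex lam T' by (rule cs_vertex_T')
  have "r < length T'" "0 < length (T' ! r)" using r T'.length_T T'.row_nonempty by auto
  then have "T' ! r ! 0 = W' ! row_offset T' r" using row_word_nth[of r T' 0] by simp
  also have "row_offset T' r = row_offset T r" using row_offset_shape T'.shape_T shape_T by simp
  also have "\<dots> = index_of W (T ! r ! 0)" using index_of_entry[of r 0] r length_T row_nonempty by simp
  finally show ?thesis .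
qed

lemma no_descent_T':
  assumes beyond: "mid + m < hi" and d: "mid \<le> d" "d \<le> mid + m"
  shows "d \<notin> descents T'"
proof
  interpret T': cs_vertex lam T' by (rule cs_vertex_T')
  assume "d \<in> descents T'"
  then obtain r where r: "1 \<le> r" "r < ell" "d = T' ! r ! 0 - 1" using T'.descents_eq_row_starts by auto
  define y where "y = T ! r ! 0"
  have y_N: "y \<in> {1..N}" using entry_bounds row_nonempty r length_T y_def by simp
  have y_block_end: "y = block_end r + 1" using block_end_row[of r] r y_N y_def by simp
  have d_y: "d = W' ! index_of W y - 1" using row_start_T' r y_def by simp
  show False
  proof (cases "y \<in> {j..j + 2 * m}")
    case False
    then have "block_end i \<le> block_end r" "block_end r < block_end (i + 1)"
      using std_value_outside_I[OF y_N] d_y y_block_end d beyond unfolding mid_def hi_def by auto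
    then have "r = i" using between_block_ends[of i "i + 1" r] i_less_ell by simp
    then show False using False y_block_end mid_eq m_pos unfolding mid_def by simp
  next
    case True
    then have "block_end (i - 1) \<le> block_end r" "block_end r < block_end (i + 1)"
      using I_bounds y_block_end unfolding lo_def hi_def by auto
    then have "i - 1 \<le> r" "r < i + 1" using between_block_ends[of "i - 1" "i + 1" r] i_less_ell by auto
    then consider "r = i" | "r = i - 1" by linarith
    then show False
    proof cases
      case 1
      then have "d = mid - 1" using d_y std_value_mid_Suc y_block_end unfolding mid_def by simp
      then show False using d lo_le_mid mid_eq j_pos by simp
    next
      case 2
      then have "y = lo" using y_block_end unfolding lo_def by simp
      then have "d = lo - 1" using d_y std_value_lo True I_bounds by simp
      then show False using d lo_le_mid by (simp add: lo_def)
    qed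
  qed
qed

lemma k0_less_index_of_beyond:
  assumes beyond: "mid + m < hi"
  shows "k0 < index_of W (mid + m + 1)"
proof -
  interpret T': cs_vertex lam T' by (rule cs_vertex_T')
  have d0: "mid \<le> W' ! k0" "W' ! k0 \<le> mid + m" using std_value_x0_bounds by auto
  have "index_of W' (W' ! k0) < index_of W' (mid + m + 1)"
  proof (rule T'.index_of_less_if_no_descents)
    fix d assume "W' ! k0 \<le> d" "d < mid + m + 1"
    then have "d \<notin> descents T'" "1 \<le> d" "d < length W'"
      using no_descent_T' beyond d0 mid_eq j_pos hi_le_N T'.length_W by auto
    then show "\<not> rowof T' d < rowof T' (Suc d)" unfolding descents_def by auto
  qed (use d0 mid_eq j_pos beyond hi_le_N in auto)
  moreover have "index_of W' (W' ! k0) = k0"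
    using index_of_nth[OF T'.distinct_W] k0_less_N T'.length_W by simp
  moreover have "W' ! index_of W (mid + m + 1) = mid + m + 1"
    using std_value_outside_I[of "mid + m + 1"] beyond hi_le_N mid_eq by simp
  then have "index_of W' (mid + m + 1) = index_of W (mid + m + 1)"
    using index_of_nth[OF T'.distinct_W] index_of_in[OF distinct_W, of "mid + m + 1"]
      set_W length_W T'.length_W beyond hi_le_N by (metis atLeastAtMost_iff le_add2 le_trans less_imp_le_nat
        add.commute plus_1_eq_Suc Suc_le_eq)
  ultimately show ?thesis by simp
qed

abbreviation "block_word \<equiv> map (blockof (Des T)) W"

lemma excess_blocks:
  "excess i (take n block_word) = int (card ({lo..mid} \<inter> seen n)) - int (card ({mid + 1..hi} \<inter> seen n))"
proof -
  have blockof_seen: "blockof (Des T) x = k \<longleftrightarrow> x \<in> comp_block (Des T) k"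
    if "x \<in> seen n" "1 \<le> k" for x k
    using blockof_eq_iff seen_subset that by blast
  have "{x. blockof (Des T) x = i} \<inter> seen n = {lo..mid} \<inter> seen n"
  proof (intro set_eqI)
    fix x
    show "x \<in> {x. blockof (Des T) x = i} \<inter> seen n \<longleftrightarrow> x \<in> {lo..mid} \<inter> seen n"
      using blockof_seen[of x i] i_pos comp_block_i by auto
  qed
  moreover have "{x. blockof (Des T) x = i + 1} \<inter> seen n = {mid + 1..hi} \<inter> seen n"
  proof (intro set_eqI)
    fix x
    show "x \<in> {x. blockof (Des T) x = i + 1} \<inter> seen n \<longleftrightarrow> x \<in> {mid + 1..hi} \<inter> seen n"
      using blockof_seen[of x "i + 1"] comp_block_Suc_i by auto
  qed
  ultimately show ?thesis using excess_take_map[OF distinct_W, of i n "blockof (Des T)"] by simp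
qed

lemma card_lower_split:
  "card ({lo..mid} \<inter> seen n) = card ({lo..<j} \<inter> seen n) + card ({j..mid} \<inter> seen n)"
proof -
  have "{lo..mid} \<inter> seen n = ({lo..<j} \<inter> seen n) \<union> ({j..mid} \<inter> seen n)"
    using I_bounds mid_eq by auto
  moreover have "({lo..<j} \<inter> seen n) \<inter> ({j..mid} \<inter> seen n) = {}" by auto
  ultimately show ?thesis by (simp add: card_Un_disjoint)
qed

lemma excess_blocks_le: "n \<le> N \<Longrightarrow> excess i (take n block_word) \<le> int (j - lo) + 1"
proof -
  assume n: "n \<le> N"
  have "excess j (take n collapsed_word) \<le> 1"
    using excess_take_le_max_excess[of n collapsed_word j] length_brk_max_excess[of j collapsed_word]
      length_fst_brk_collapsed n length_W by simp
  moreover have "card ({lo..<j} \<inter> seen n) \<le> j - lo" using card_mono[of "{lo..<j}"] by fastforce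
  moreover have "card ({mid + 1..mid + m} \<inter> seen n) \<le> card ({mid + 1..hi} \<inter> seen n)"
    using I_bounds mid_eq by (intro card_mono) auto
  ultimately show ?thesis
    using excess_blocks[of n] excess_collapsed[of n] card_lower_split[of n] by linarith
qed

lemma lower_seen_by_k0: "{lo..<j} \<inter> seen (Suc k0) = {lo..<j}"
proof -
  have "y \<in> seen (Suc k0)" if y: "y \<in> {lo..<j}" for y
  proof -
    have "y \<in> {1..N}" using y mid_m_le_N mid_eq by (auto simp: lo_def)
    moreover have "index_of W y < index_of W x0" using index_of_less_lower y x0_bounds by simp
    ultimately show ?thesis using in_seen_iff index_of_x0 by simp
  qed
  then show ?thesis by blast
qed

lemma upper_seen_by_k0: "{mid + 1..hi} \<inter> seen (Suc k0) = {mid + 1..mid + m} \<inter> seen (Suc k0)"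
proof -
  have beyond_unseen: "z \<notin> seen (Suc k0)" if z: "z \<in> {mid + m + 1..hi}" for z
  proof -
    have "index_of W (mid + m + 1) \<le> index_of W z"
      using index_of_less_upper[of "mid + m + 1" z] z by (cases "z = mid + m + 1") auto
    then have "k0 < index_of W z" using k0_less_index_of_beyond z by fastforce
    moreover have "z \<in> {1..N}" using z hi_le_N by auto
    ultimately show ?thesis using in_seen_iff by simp
  qed
  show ?thesis
  proof (intro set_eqI iffI)
    fix z assume z: "z \<in> {mid + 1..hi} \<inter> seen (Suc k0)"
    then show "z \<in> {mid + 1..mid + m} \<inter> seen (Suc k0)"
      using beyond_unseen[of z] by (cases "z \<le> mid + m") auto
  qed (use I_bounds mid_eq in auto)
qed

lemma excess_blocks_upto_k0: "excess i (take (Suc k0) block_word) = int (j - lo) + 1"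
  using excess_blocks[of "Suc k0"] excess_collapsed[of "Suc k0"] card_lower_split[of "Suc k0"]
    upper_seen_by_k0 lower_seen_by_k0 excess_collapsed_upto_k0 by simp

lemma max_excess_blocks: "max_excess i block_word = int (j - lo) + 1"
proof (rule antisym)
  show "max_excess i block_word \<le> int (j - lo) + 1" using excess_blocks_le length_W by (intro max_excess_le) simp
  show "int (j - lo) + 1 \<le> max_excess i block_word"
    using excess_take_le_max_excess[of "Suc k0" block_word i] excess_blocks_upto_k0 k0_less_N length_W by simp
qed

lemma excess_blocks_total: "excess i block_word = int (mid - lo + 1) - int (hi - mid)"
proof -
  have "{lo..mid} \<inter> seen N = {lo..mid}" "{mid + 1..hi} \<inter> seen N = {mid + 1..hi}"
    using seen_N hi_le_N mid_less_hi lo_le_mid by (auto simp: lo_def)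
  then show ?thesis using excess_blocks[of N] length_W lo_le_mid by simp
qed

lemma phi_eps_blocks:
  "phi i (map (map (blockof (Des T))) T) = j - lo + 1 \<and>
   eps i (map (map (blockof (Des T))) T) = hi - (j + 2 * m)"
proof -
  have "int (phi i (map (map (blockof (Des T))) T)) = int (j - lo) + 1"
    unfolding phi_eq_length_brk row_word_map using length_brk_max_excess[of i block_word] max_excess_blocks by simp
  moreover have "int (eps i (map (map (blockof (Des T))) T)) = int (hi - (j + 2 * m))"
    unfolding eps_eq_length_brk row_word_map
    using length_brk_max_excess[of i block_word] max_excess_blocks excess_blocks_total I_bounds lo_le_mid
      mid_less_hi mid_eq by simp
  ultimately show ?thesis by simp
qed

end

theorem corollary4p39:
  fixes lam :: "nat list" and T T' :: "nat list list" and I :: "nat set" and i :: nat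
  assumes "partition lam"
    and "T \<in> CS_vert lam"
    and "CS_edge lam T I T'"
    and "1 \<le> i" and "i + 1 \<le> length (Des T)"
    and "I \<subseteq> comp_block (Des T) i \<union> comp_block (Des T) (i + 1)"
  shows "phi i (map (map (blockof (Des T))) T) = Min I - Min (comp_block (Des T) i) + 1
       \<and> eps i (map (map (blockof (Des T))) T) = Max (comp_block (Des T) (i + 1)) - Max I"
proof -
  obtain j m c' where I: "I = {j..j + 2 * m}" and dyck: "dyck_pattern (row_word T) j m"
    and f: "tab_f j (dyck_collapse j m T) = Some c'" and T': "T' = std c'"
    using assms(3) unfolding CS_edge_def cs_edge_def by blast
  interpret dyck_edge lam T T' I i j m c'
    using assms I dyck f T' by unfold_locales (auto simp: CS_vert_def CS_edge_def)
  have "Min I = j" "Max I = j + 2 * m" unfolding I by (auto intro: Min_eqI Max_eqI)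
  moreover have "Min (comp_block (Des T) i) = lo" "Max (comp_block (Des T) (i + 1)) = hi"
    unfolding comp_block_i comp_block_Suc_i using lo_le_mid mid_less_hi by (auto intro: Min_eqI Max_eqI)
  ultimately show ?thesis using phi_eps_blocks by simp
qed

end
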